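(* Let $q\ge2$, $n\ge1$ and $\boldsymbol{x}\neq\boldsymbol{y}\in\Sigma_q^n$. (1) $d_H(\mathcal{R}(\boldsymbol{x}),\mathcal{R}(\boldsymbol{y}))=3$ if and only if there exist $\boldsymbol{u},\boldsymbol{v}\in\Sigma_q^{\ge0}$, integers $t_1,t_2\ge1$ and symbols $a_1,b_1,a_2,b_2\in\Sigma_q$ with $a_1\ne b_1$, $a_2\ne b_2$, such that $\{\{\alpha_{t_1}(a_1b_1)[t_1],a_2\}\}\neq\{\{\alpha_{t_1}(b_1a_1)[t_1],b_2\}\}$ and $\boldsymbol{x}=(\boldsymbol{u},\boldsymbol{\alpha}_{t_1}(a_1b_1),\boldsymbol{\alpha}_{t_2}(a_2b_2),\boldsymbol{v})$, $\boldsymbol{y}=(\boldsymbol{u},\boldsymbol{\alpha}_{t_1}(b_1a_1),\boldsymbol{\alpha}_{t_2}(b_2a_2),\boldsymbol{v})$. (2) $d_H(\mathcal{R}(\boldsymbol{x}),\mathcal{R}(\boldsymbol{y}))=4$ if and only if one of the following holds: (A) there exist $\boldsymbol{u},\boldsymbol{w}\in\Sigma_q^{\ge0}$, $\boldsymbol{v}\in\Sigma_q^{\ge1}$, integers $t_1,t_2\ge1$ and symbols $a_1,b_1,a_2,b_2\in\Sigma_q$ with $a_1\ne b_1$, $a_2\ne b_2$, such that $\boldsymbol{x}=(\boldsymbol{u},\boldsymbol{\alpha}_{t_1}(a_1b_1),\boldsymbol{v},\boldsymbol{\alpha}_{t_2}(a_2b_2),\boldsymbol{w})$ and $\boldsymbol{y}=(\boldsymbol{u},\boldsymbol{\alpha}_{t_1}(b_1a_1),\boldsymbol{v},\boldsymbol{\alpha}_{t_2}(b_2a_2),\boldsymbol{w})$;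 (B) there exist $\boldsymbol{u},\boldsymbol{v}\in\Sigma_q^{\ge0}$, integers $t_1,t_2,t_3\ge1$ and symbols $a_1,b_1,a_2,b_2,a_3,b_3\in\Sigma_q$ with $a_i\ne b_i$ ($i=1,2,3$), such that $\{\{\alpha_{t_1}(a_1b_1)[t_1],a_2\}\}\neq\{\{\alpha_{t_1}(b_1a_1)[t_1],b_2\}\}$, $\{\{\alpha_{t_2}(a_2b_2)[t_2],a_3\}\}\neq\{\{\alpha_{t_2}(b_2a_2)[t_2],b_3\}\}$, and $\boldsymbol{x}=(\boldsymbol{u},\boldsymbol{\alpha}_{t_1}(a_1b_1),\boldsymbol{\alpha}_{t_2}(a_2b_2),\boldsymbol{\alpha}_{t_3}(a_3b_3),\boldsymbol{v})$, $\boldsymbol{y}=(\boldsymbol{u},\boldsymbol{\alpha}_{t_1}(b_1a_1),\boldsymbol{\alpha}_{t_2}(b_2a_2),\boldsymbol{\alpha}_{t_3}(b_3a_3),\boldsymbol{v})$.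
   Context: $\Sigma_q=\{0,\dots,q-1\}$; $\Sigma_q^{\ge0}$ (resp. $\Sigma_q^{\ge1}$) is the set of all finite (resp. nonempty finite) sequences over $\Sigma_q$; $(\cdot,\cdot)$ is concatenation. For $\boldsymbol{x}\in\Sigma_q^n$, $x[i]$ is its $i$-th entry, with $x[i]=0$ for $i\notin[1,n]$. $\mathcal{R}(\boldsymbol{x})$ is the vector of length $n+1$ whose $i$-th entry is the multiset $\{\{x[i-1],x[i]\}\}$. $d_H$ is Hamming distance. For distinct $a,b$ and $t\ge0$, $\boldsymbol{\alpha}_t(ab)$ is the alternating sequence $abab\cdots$ of length $t$ and $\alpha_t(ab)[t]$ its last entry; $\{\{\cdot\}\}$ denotes a multiset. *)

theory Defs
  imports Main "HOL-Library.Multiset"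
begin

definition seqs :: "nat \<Rightarrow> nat list set" where
  "seqs q = {xs. \<forall>c\<in>set xs. c < q}"

text \<open>1-indexed entry x[i], with x[i] = 0 for i outside [1,n].\<close>
definition entry :: "nat list \<Rightarrow> nat \<Rightarrow> nat" where
  "entry xs i = (if 1 \<le> i \<and> i \<le> length xs then xs ! (i - 1) else 0)"

definition Rvec :: "nat list \<Rightarrow> nat multiset list" where
  "Rvec xs = map (\<lambda>i. {# entry xs (i - 1), entry xs i #}) [1..<length xs + 2]"

definition hamming :: "'a list \<Rightarrow> 'a list \<Rightarrow> nat" where
  "hamming xs ys = card {i. i < length xs \<and> i < length ys \<and> xs ! i \<noteq> ys ! i}"

definition alt :: "nat \<Rightarrow> nat \<Rightarrow> nat \<Rightarrow> nat list" where
  "alt t a b = map (\<lambda>i. if even i then a else b) [0..<t]"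

definition alt_last :: "nat \<Rightarrow> nat \<Rightarrow> nat \<Rightarrow> nat" where
  "alt_last t a b = entry (alt t a b) t"

end

theory Submission
  imports Defs
begin

text \<open>The positions where x and y differ split uniquely
  into maximal runs on which x reads \<alpha>_t(ab) and y reads \<alpha>_t(ba). Inside a run both
  R-vectors have the entry {{a,b}}; the entry entering a run differs, and so does the entry leaving
  it, by maximality. When two runs are adjacent the entry leaving the first one is the entry
  entering the second, so a block of k adjacent runs costs exactly k + 1. Hence the distance is 2
  for a single run, 3 for two adjacent runs, and 4 for two separated runs or three adjacent ones.\<close>

lemma add_mset_pair_eq_iff:
  "{#a, b#} = {#c, d#} \<longleftrightarrow> a = c \<and> b = d \<or> a = d \<and> b = c"
  by (auto simp: add_eq_conv_ex)

lemma add_mset_pair_eq_same_iff: "{#a, c#} = {#b, c#} \<longleftrightarrow> a = b"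
  by (auto simp: add_mset_pair_eq_iff)

lemma hamming_Nil [simp]: "hamming [] [] = 0"
  by (simp add: hamming_def)

lemma hamming_Cons [simp]:
  "hamming (a # xs) (b # ys) = (if a = b then 0 else 1) + hamming xs ys"
proof -
  let ?D = "{i. i < length xs \<and> i < length ys \<and> xs ! i \<noteq> ys ! i}"
  have "{i. i < length (a # xs) \<and> i < length (b # ys) \<and> (a # xs) ! i \<noteq> (b # ys) ! i}
      = (if a = b then {} else {0}) \<union> Suc ` ?D" (is "?L = ?R")
  proof (rule set_eqI)
    show "i \<in> ?L \<longleftrightarrow> i \<in> ?R" for i
      by (cases i) auto
  qed
  then show ?thesis
    by (simp add: hamming_def card_image)
qed

fun Rvec_from :: "nat \<Rightarrow> nat list \<Rightarrow> nat multiset list" where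
  "Rvec_from p [] = [{#p, 0#}]"
| "Rvec_from p (a # xs) = {#p, a#} # Rvec_from a xs"

lemma Rvec_from_eq_map2: "Rvec_from p xs = map2 (\<lambda>a b. {#a, b#}) (p # xs) (xs @ [0])"
  by (induction xs arbitrary: p) auto

lemma Rvec_eq_Rvec_from: "Rvec xs = Rvec_from 0 xs"
proof (rule nth_equalityI)
  show "length (Rvec xs) = length (Rvec_from 0 xs)"
    by (simp add: Rvec_def Rvec_from_eq_map2 del: upt_Suc)
next
  fix i assume "i < length (Rvec xs)"
  then have "i \<le> length xs"
    by (simp add: Rvec_def del: upt_Suc)
  moreover have "entry xs i = (0 # xs) ! i" "entry xs (Suc i) = (xs @ [0]) ! i"
    using \<open>i \<le> length xs\<close> by (auto simp: entry_def nth_append nth_Cons split: nat.splits)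
  ultimately show "Rvec xs ! i = Rvec_from 0 xs ! i"
    by (simp add: Rvec_def Rvec_from_eq_map2 nth_append del: upt_Suc)
qed

abbreviation Rdist :: "nat \<Rightarrow> nat \<Rightarrow> nat list \<Rightarrow> nat list \<Rightarrow> nat" where
  "Rdist c d xs ys \<equiv> hamming (Rvec_from c xs) (Rvec_from d ys)"

lemma Rdist_self: "Rdist c d xs xs = (if c = d then 0 else 1)"
  by (induction xs arbitrary: c d) (auto simp: add_mset_pair_eq_same_iff)

lemma Rdist_append_same:
  "Rdist p p (u @ xs) (u @ ys) = Rdist (last (p # u)) (last (p # u)) xs ys"
  by (induction u arbitrary: p) auto

lemma Rdist_eq_0_iff:
  "length xs = length ys \<Longrightarrow> Rdist c d xs ys = 0 \<longleftrightarrow> c = d \<and> xs = ys"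
  by (induction xs ys arbitrary: c d rule: list_induct2)
    (auto simp: add_mset_pair_eq_iff add_mset_pair_eq_same_iff)

lemma Rdist_neq_1:
  "length xs = length ys \<Longrightarrow> Rdist p p xs ys \<noteq> 1"
  by (induction xs ys arbitrary: p rule: list_induct2) (auto simp: Rdist_eq_0_iff)

lemma alt_Suc: "alt (Suc t) a b = a # alt t b a"
  by (simp add: alt_def map_upt_Suc del: upt_Suc)

lemma alt_0 [simp]: "alt 0 a b = []"
  by (simp add: alt_def)

lemma length_alt [simp]: "length (alt t a b) = t"
  by (simp add: alt_def)

lemma alt_last_eq: "0 < t \<Longrightarrow> alt_last t a b = (if odd t then a else b)"
  by (simp add: alt_last_def entry_def alt_def)

lemma alt_last_swap_neq: "0 < t \<Longrightarrow> a \<noteq> b \<Longrightarrow> alt_last t a b \<noteq> alt_last t b a"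
  by (simp add: alt_last_eq)

lemma Rdist_alt_append:
  assumes "0 < t"
  shows "Rdist c d (alt t a b @ xs) (alt t b a @ ys)
    = (if {#c, a#} = {#d, b#} then 0 else 1) + Rdist (alt_last t a b) (alt_last t b a) xs ys"
  using assms
proof (induction t arbitrary: a b c d)
  case (Suc t)
  then show ?case
    by (cases t) (auto simp: alt_Suc alt_last_eq add_mset_commute)
qed simp

lemma Rdist_prefix_alt_append:
  "0 < t \<Longrightarrow> a \<noteq> b \<Longrightarrow>
   Rdist p p (u @ alt t a b @ s) (u @ alt t b a @ s') = 1 + Rdist (alt_last t a b) (alt_last t b a) s s'"
  by (simp add: Rdist_append_same Rdist_alt_append add_mset_pair_eq_same_iff)

lemma Rdist_alt_append_same:
  "0 < t \<Longrightarrow> a \<noteq> b \<Longrightarrow> {#e, a#} \<noteq> {#f, b#} \<Longrightarrow>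
   Rdist e f (alt t a b @ v) (alt t b a @ v) = 2"
  by (simp add: Rdist_alt_append Rdist_self alt_last_swap_neq)

lemma Rdist_prefix_alt_append_same:
  "0 < t \<Longrightarrow> a \<noteq> b \<Longrightarrow> Rdist p p (u @ alt t a b @ v) (u @ alt t b a @ v) = 2"
  by (simp add: Rdist_prefix_alt_append Rdist_self alt_last_swap_neq)

text \<open>The entry of the R-vectors straddling the end of a run whose last symbols are e and f
  differs, so the run cannot be extended; for a nonempty remainder this is the paper's condition
  {{\<alpha>_t(ab)[t], a'}} \<noteq> {{\<alpha>_t(ba)[t], b'}}.\<close>

definition run_ends :: "nat \<Rightarrow> nat \<Rightarrow> nat list \<Rightarrow> nat list \<Rightarrow> bool" where
  "run_ends e f s s' \<longleftrightarrow> (s \<noteq> [] \<longrightarrow> {#e, hd s#} \<noteq> {#f, hd s'#})"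

lemma maximal_alt_run:
  "length r = length r' \<Longrightarrow> a \<noteq> b \<Longrightarrow>
   \<exists>t s s'. 0 < t \<and> a # r = alt t a b @ s \<and> b # r' = alt t b a @ s' \<and>
     length s = length s' \<and> run_ends (alt_last t a b) (alt_last t b a) s s'"
proof (induction r r' arbitrary: a b rule: list_induct2)
  case Nil
  show ?case
    by (rule exI[of _ 1]) (simp add: alt_Suc run_ends_def)
next
  case (Cons c r d r')
  show ?case
  proof (cases "{#a, c#} = {#b, d#}")
    case True
    with Cons.prems have "c = b" "d = a"
      by (auto simp: add_mset_pair_eq_iff)
    with Cons.IH[of b a] Cons.prems obtain t s s' where
      "0 < t" "b # r = alt t b a @ s" "a # r' = alt t a b @ s'" "length s = length s'"
      "run_ends (alt_last t b a) (alt_last t a b) s s'"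
      by blast
    with \<open>c = b\<close> \<open>d = a\<close> show ?thesis
      by (intro exI[of _ "Suc t"]) (auto simp: alt_Suc alt_last_eq)
  next
    case False
    with Cons.hyps show ?thesis
      by (intro exI[of _ 1]) (simp add: alt_Suc alt_last_eq run_ends_def)
  qed
qed

lemma first_alt_run:
  assumes "length xs = length ys" "xs \<noteq> ys"
  obtains u t a b s s' where "0 < t" "a \<noteq> b"
    "xs = u @ alt t a b @ s" "ys = u @ alt t b a @ s'" "length s = length s'"
    "run_ends (alt_last t a b) (alt_last t b a) s s'"
proof -
  obtain u r r' where split: "xs = u @ r" "ys = u @ r'" "r = [] \<or> r' = [] \<or> hd r \<noteq> hd r'"
    using longest_common_prefix by blast
  with assms obtain a b r0 r0' where "r = a # r0" "r' = b # r0'" "a \<noteq> b" "length r0 = length r0'"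
    by (cases r; cases r') auto
  moreover obtain t s s' where "0 < t" "a # r0 = alt t a b @ s" "b # r0' = alt t b a @ s'"
    "length s = length s'" "run_ends (alt_last t a b) (alt_last t b a) s s'"
    using maximal_alt_run[of r0 r0' a b] \<open>length r0 = length r0'\<close> \<open>a \<noteq> b\<close> by blast
  ultimately show thesis
    using split that by simp
qed

lemma run_ends_cases:
  assumes "length s = length s'" "run_ends e f s s'"
  obtains (last) "s = []" "s' = []"
  | (sync) g w w' where "s = g # w" "s' = g # w'" "length w = length w'"
  | (run) t a b s2 s2' where "0 < t" "a \<noteq> b" "{#e, a#} \<noteq> {#f, b#}"
      "s = alt t a b @ s2" "s' = alt t b a @ s2'" "length s2 = length s2'"
      "run_ends (alt_last t a b) (alt_last t b a) s2 s2'"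
proof (cases s)
  case Nil
  with assms(1) show thesis
    using last by simp
next
  case (Cons a r)
  with assms(1) obtain b r' where s': "s' = b # r'" "length r = length r'"
    by (cases s') auto
  show thesis
  proof (cases "a = b")
    case True
    with Cons s' show thesis
      using sync by simp
  next
    case False
    with Cons s' assms(2) have "{#e, a#} \<noteq> {#f, b#}"
      by (simp add: run_ends_def)
    moreover obtain t s2 s2' where "0 < t" "a # r = alt t a b @ s2" "b # r' = alt t b a @ s2'"
      "length s2 = length s2'" "run_ends (alt_last t a b) (alt_last t b a) s2 s2'"
      using maximal_alt_run[of r r' a b] s'(2) False by blast
    ultimately show thesis
      using run False Cons s'(1) by simp
  qed
qed

lemma Rdist_run_ends_eq_1_iff:
  assumes "e \<noteq> f" "length s = length s'" "run_ends e f s s'"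
  shows "Rdist e f s s' = 1 \<longleftrightarrow> s = s'"
proof
  assume dist: "Rdist e f s s' = 1"
  from assms(2,3) show "s = s'"
  proof (cases rule: run_ends_cases)
    case (sync g w w')
    with dist assms(1) show ?thesis
      by (simp add: add_mset_pair_eq_same_iff Rdist_eq_0_iff)
  next
    case (run t a b s2 s2')
    with dist have "Rdist (alt_last t a b) (alt_last t b a) s2 s2' = 0"
      by (simp add: Rdist_alt_append)
    with run show ?thesis
      by (simp add: Rdist_eq_0_iff alt_last_swap_neq)
  qed simp
qed (simp add: Rdist_self assms(1))

lemma Rdist_run_ends_eq_2_iff:
  assumes "e \<noteq> f" "length s = length s'" "run_ends e f s s'"
  shows "Rdist e f s s' = 2 \<longleftrightarrow>
    (\<exists>t a b v. 0 < t \<and> a \<noteq> b \<and> {#e, a#} \<noteq> {#f, b#} \<and> s = alt t a b @ v \<and> s' = alt t b a @ v)"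
    (is "_ \<longleftrightarrow> ?run")
proof
  assume dist: "Rdist e f s s' = 2"
  from assms(2,3) show ?run
  proof (cases rule: run_ends_cases)
    case last
    with dist assms(1) show ?thesis
      by simp
  next
    case (sync g w w')
    with dist assms(1) have "Rdist g g w w' = 1"
      by (simp add: add_mset_pair_eq_same_iff)
    with sync show ?thesis
      using Rdist_neq_1 by blast
  next
    case (run t a b s2 s2')
    with dist have "Rdist (alt_last t a b) (alt_last t b a) s2 s2' = 1"
      by (simp add: Rdist_alt_append)
    with run have "s2 = s2'"
      using Rdist_run_ends_eq_1_iff alt_last_swap_neq by blast
    with run show ?thesis
      by blast
  qed
next
  assume ?run
  then show "Rdist e f s s' = 2"
    using Rdist_alt_append_same by blast
qed

lemma Rdist_eq_2_iff:
  assumes "length xs = length ys"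
  shows "Rdist p p xs ys = 2 \<longleftrightarrow>
    (\<exists>u t a b v. 0 < t \<and> a \<noteq> b \<and> xs = u @ alt t a b @ v \<and> ys = u @ alt t b a @ v)"
    (is "_ \<longleftrightarrow> ?run")
proof
  assume dist: "Rdist p p xs ys = 2"
  then have "xs \<noteq> ys"
    by (auto simp: Rdist_self)
  with assms obtain u t a b s s' where run: "0 < t" "a \<noteq> b"
    "xs = u @ alt t a b @ s" "ys = u @ alt t b a @ s'" "length s = length s'"
    "run_ends (alt_last t a b) (alt_last t b a) s s'"
    by (rule first_alt_run)
  with dist have "Rdist (alt_last t a b) (alt_last t b a) s s' = 1"
    by (simp add: Rdist_prefix_alt_append)
  with run have "s = s'"
    using Rdist_run_ends_eq_1_iff alt_last_swap_neq by blast
  with run show ?run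
    by blast
qed (auto simp: Rdist_prefix_alt_append_same)

lemma Rdist_eq_3_iff:
  assumes "length xs = length ys"
  shows "Rdist p p xs ys = 3 \<longleftrightarrow>
    (\<exists>u v t1 t2 a1 b1 a2 b2. 0 < t1 \<and> 0 < t2 \<and> a1 \<noteq> b1 \<and> a2 \<noteq> b2 \<and>
       {#alt_last t1 a1 b1, a2#} \<noteq> {#alt_last t1 b1 a1, b2#} \<and>
       xs = u @ alt t1 a1 b1 @ alt t2 a2 b2 @ v \<and> ys = u @ alt t1 b1 a1 @ alt t2 b2 a2 @ v)"
    (is "_ \<longleftrightarrow> ?runs")
proof
  assume dist: "Rdist p p xs ys = 3"
  then have "xs \<noteq> ys"
    by (auto simp: Rdist_self)
  with assms obtain u t a b s s' where run: "0 < t" "a \<noteq> b"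
    "xs = u @ alt t a b @ s" "ys = u @ alt t b a @ s'" "length s = length s'"
    "run_ends (alt_last t a b) (alt_last t b a) s s'"
    by (rule first_alt_run)
  with dist have "Rdist (alt_last t a b) (alt_last t b a) s s' = 2"
    by (simp add: Rdist_prefix_alt_append)
  then obtain t2 a2 b2 v where "0 < t2" "a2 \<noteq> b2"
    "{#alt_last t a b, a2#} \<noteq> {#alt_last t b a, b2#}" "s = alt t2 a2 b2 @ v" "s' = alt t2 b2 a2 @ v"
    using Rdist_run_ends_eq_2_iff[OF alt_last_swap_neq[OF run(1,2)] run(5,6)] by blast
  with run show ?runs
    by blast
next
  assume ?runs
  then obtain u v t1 t2 a1 b1 a2 b2 where "0 < t1" "0 < t2" "a1 \<noteq> b1" "a2 \<noteq> b2"
    "{#alt_last t1 a1 b1, a2#} \<noteq> {#alt_last t1 b1 a1, b2#}"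
    "xs = u @ alt t1 a1 b1 @ alt t2 a2 b2 @ v" "ys = u @ alt t1 b1 a1 @ alt t2 b2 a2 @ v"
    by blast
  then show "Rdist p p xs ys = 3"
    by (simp add: Rdist_prefix_alt_append Rdist_alt_append_same)
qed

lemma Rdist_eq_4_iff:
  assumes "length xs = length ys"
  shows "Rdist p p xs ys = 4 \<longleftrightarrow>
    (\<exists>u v w t1 t2 a1 b1 a2 b2. v \<noteq> [] \<and> 0 < t1 \<and> 0 < t2 \<and> a1 \<noteq> b1 \<and> a2 \<noteq> b2 \<and>
       xs = u @ alt t1 a1 b1 @ v @ alt t2 a2 b2 @ w \<and> ys = u @ alt t1 b1 a1 @ v @ alt t2 b2 a2 @ w) \<or>
    (\<exists>u v t1 t2 t3 a1 b1 a2 b2 a3 b3. 0 < t1 \<and> 0 < t2 \<and> 0 < t3 \<and>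
       a1 \<noteq> b1 \<and> a2 \<noteq> b2 \<and> a3 \<noteq> b3 \<and>
       {#alt_last t1 a1 b1, a2#} \<noteq> {#alt_last t1 b1 a1, b2#} \<and>
       {#alt_last t2 a2 b2, a3#} \<noteq> {#alt_last t2 b2 a2, b3#} \<and>
       xs = u @ alt t1 a1 b1 @ alt t2 a2 b2 @ alt t3 a3 b3 @ v \<and>
       ys = u @ alt t1 b1 a1 @ alt t2 b2 a2 @ alt t3 b3 a3 @ v)"
    (is "_ \<longleftrightarrow> ?separated \<or> ?adjacent")
proof
  assume dist: "Rdist p p xs ys = 4"
  then have "xs \<noteq> ys"
    by (auto simp: Rdist_self)
  with assms obtain u t a b s s' where run: "0 < t" "a \<noteq> b"
    "xs = u @ alt t a b @ s" "ys = u @ alt t b a @ s'" "length s = length s'"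
    "run_ends (alt_last t a b) (alt_last t b a) s s'"
    by (rule first_alt_run)
  with dist have dist_s: "Rdist (alt_last t a b) (alt_last t b a) s s' = 3"
    by (simp add: Rdist_prefix_alt_append)
  from run(5,6) show "?separated \<or> ?adjacent"
  proof (cases rule: run_ends_cases)
    case last
    with dist_s show ?thesis
      by (simp split: if_splits)
  next
    case (sync g w w')
    with dist_s run(1,2) have "Rdist g g w w' = 2"
      by (simp add: add_mset_pair_eq_same_iff alt_last_swap_neq)
    then obtain u2 t2 a2 b2 v where
      "0 < t2" "a2 \<noteq> b2" "w = u2 @ alt t2 a2 b2 @ v" "w' = u2 @ alt t2 b2 a2 @ v"
      using Rdist_eq_2_iff[OF sync(3)] by blast
    moreover from this run sync have
      "xs = u @ alt t a b @ (g # u2) @ alt t2 a2 b2 @ v" "ys = u @ alt t b a @ (g # u2) @ alt t2 b2 a2 @ v"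
      by simp_all
    ultimately have ?separated
      using run(1,2) by blast
    then show ?thesis ..
  next
    case run2: (run t2 a2 b2 s2 s2')
    with dist_s have "Rdist (alt_last t2 a2 b2) (alt_last t2 b2 a2) s2 s2' = 2"
      by (simp add: Rdist_alt_append)
    then obtain t3 a3 b3 v where "0 < t3" "a3 \<noteq> b3"
      "{#alt_last t2 a2 b2, a3#} \<noteq> {#alt_last t2 b2 a2, b3#}" "s2 = alt t3 a3 b3 @ v" "s2' = alt t3 b3 a3 @ v"
      using Rdist_run_ends_eq_2_iff[OF alt_last_swap_neq[OF run2(1,2)] run2(6,7)] by blast
    with run run2 have ?adjacent
      by blast
    then show ?thesis ..
  qed
next
  assume "?separated \<or> ?adjacent"
  then show "Rdist p p xs ys = 4"
  proof
    assume ?separated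
    then obtain u g v w t1 t2 a1 b1 a2 b2 where "0 < t1" "0 < t2" "a1 \<noteq> b1" "a2 \<noteq> b2"
      "xs = u @ alt t1 a1 b1 @ g # v @ alt t2 a2 b2 @ w" "ys = u @ alt t1 b1 a1 @ g # v @ alt t2 b2 a2 @ w"
      by (metis neq_Nil_conv append_Cons)
    then show ?thesis
      by (simp add: Rdist_prefix_alt_append add_mset_pair_eq_same_iff alt_last_swap_neq Rdist_self)
  next
    assume ?adjacent
    then obtain u v t1 t2 t3 a1 b1 a2 b2 a3 b3 where "0 < t1" "0 < t2" "0 < t3"
      "a1 \<noteq> b1" "a2 \<noteq> b2" "a3 \<noteq> b3"
      "{#alt_last t1 a1 b1, a2#} \<noteq> {#alt_last t1 b1 a1, b2#}"
      "{#alt_last t2 a2 b2, a3#} \<noteq> {#alt_last t2 b2 a2, b3#}"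
      "xs = u @ alt t1 a1 b1 @ alt t2 a2 b2 @ alt t3 a3 b3 @ v"
      "ys = u @ alt t1 b1 a1 @ alt t2 b2 a2 @ alt t3 b3 a3 @ v"
      by blast
    then show ?thesis
      by (simp add: Rdist_prefix_alt_append Rdist_alt_append Rdist_self alt_last_swap_neq)
  qed
qed

lemma append_in_seqs_iff [simp]: "xs @ ys \<in> seqs q \<longleftrightarrow> xs \<in> seqs q \<and> ys \<in> seqs q"
  by (auto simp: seqs_def)

lemma alt_in_seqsD: "0 < t \<Longrightarrow> alt t a b \<in> seqs q \<Longrightarrow> a < q"
  by (cases t) (auto simp: seqs_def alt_Suc)

theorem theorem3:
  fixes q n :: nat and x y :: "nat list"
  assumes "q \<ge> 2" and "n \<ge> 1"
    and "x \<in> seqs q" and "y \<in> seqs q" and "length x = n" and "length y = n"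
    and "x \<noteq> y"
  shows "(hamming (Rvec x) (Rvec y) = 3 \<longleftrightarrow>
           (\<exists>u v t1 t2 a1 b1 a2 b2.
              u \<in> seqs q \<and> v \<in> seqs q \<and> t1 \<ge> 1 \<and> t2 \<ge> 1 \<and>
              a1 < q \<and> b1 < q \<and> a2 < q \<and> b2 < q \<and> a1 \<noteq> b1 \<and> a2 \<noteq> b2 \<and>
              {# alt_last t1 a1 b1, a2 #} \<noteq> {# alt_last t1 b1 a1, b2 #} \<and>
              x = u @ alt t1 a1 b1 @ alt t2 a2 b2 @ v \<and>
              y = u @ alt t1 b1 a1 @ alt t2 b2 a2 @ v))
       \<and>
       (hamming (Rvec x) (Rvec y) = 4 \<longleftrightarrow>
          ((\<exists>u v w t1 t2 a1 b1 a2 b2.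
              u \<in> seqs q \<and> v \<in> seqs q \<and> w \<in> seqs q \<and> v \<noteq> [] \<and> t1 \<ge> 1 \<and> t2 \<ge> 1 \<and>
              a1 < q \<and> b1 < q \<and> a2 < q \<and> b2 < q \<and> a1 \<noteq> b1 \<and> a2 \<noteq> b2 \<and>
              x = u @ alt t1 a1 b1 @ v @ alt t2 a2 b2 @ w \<and>
              y = u @ alt t1 b1 a1 @ v @ alt t2 b2 a2 @ w)
           \<or>
           (\<exists>u v t1 t2 t3 a1 b1 a2 b2 a3 b3.
              u \<in> seqs q \<and> v \<in> seqs q \<and> t1 \<ge> 1 \<and> t2 \<ge> 1 \<and> t3 \<ge> 1 \<and>
              a1 < q \<and> b1 < q \<and> a2 < q \<and> b2 < q \<and> a3 < q \<and> b3 < q \<and>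
              a1 \<noteq> b1 \<and> a2 \<noteq> b2 \<and> a3 \<noteq> b3 \<and>
              {# alt_last t1 a1 b1, a2 #} \<noteq> {# alt_last t1 b1 a1, b2 #} \<and>
              {# alt_last t2 a2 b2, a3 #} \<noteq> {# alt_last t2 b2 a2, b3 #} \<and>
              x = u @ alt t1 a1 b1 @ alt t2 a2 b2 @ alt t3 a3 b3 @ v \<and>
              y = u @ alt t1 b1 a1 @ alt t2 b2 a2 @ alt t3 b3 a3 @ v)))"
proof -
  have len: "length x = length y"
    using assms(5,6) by simp
  have R: "hamming (Rvec x) (Rvec y) = Rdist 0 0 x y"
    by (simp add: Rvec_eq_Rvec_from)
  show ?thesis
    unfolding R Rdist_eq_3_iff[OF len] Rdist_eq_4_iff[OF len]
    \<comment> \<open>the alphabet bounds on the witnesses are inherited from x and y\<close>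
    using assms(3,4)
    by (intro conjI iffI; elim disjE exE conjE; metis append_in_seqs_iff alt_in_seqsD One_nat_def Suc_le_eq)
qed

end
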